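(* Let $d\ge 2$ and $x\ge 1$ be integers, and let $U_1,\dots,U_x\in U(d^2)$ be unitary gates. Let $R_x$ and $L_x$ be the linear maps on $W^{\otimes x}$ built from $U_1,\dots,U_x$ as defined in the context, and for $y=0,\dots,x$ set $$r_y=\mathrm{tri}^{\otimes y}\otimes \mathrm{circ}^{\otimes (x-y)},\qquad \ell_y=\mathrm{circ}^{\otimes y}\otimes \mathrm{cross}^{\otimes (x-y)}\in W^{\otimes x},$$ where the $m$-th tensor factor corresponds to the $m$-th gate. (i) If all $U_1,\dots,U_x$ are dual-unitary, then $R_x$ has at least $x+1$ (linearly independent) right eigenvectors and at least $x+1$ left eigenvectors with eigenvalue $d^2$, explicitly given by $\{r_y\}_{y=0}^{x}$, i.e. $R_x r_y=d^2 r_y$ and $r_y^{T}R_x=d^2 r_y^{T}$ for all $y=0,\dots,x$; likewise $L_x\ell_y=d^2\ell_y$ and $\ell_y^{T}L_x=d^2\ell_y^{T}$ for all $y=0,\dots,x$. (ii) If the gates $U_1,\dots,U_x$ are merely unitary (not necessarily dual-unitary), then $r_0$ and $\ell_0$ are still right eigenvectors with eigenvalue $d^2$ (i.e. $R_xr_0=d^2r_0$, $L_x\ell_0=d^2\ell_0$), and $r_x$, $\ell_x$ are still left eigenvectors with eigenvalue $d^2$ (i.e. $r_x^TR_x=d^2r_x^T$, $\ell_x^TL_x=d^2\ell_x^T$).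
   Context: Let $V=\mathbb C^d$ with orthonormal basis $\{|i\rangle\}_{i=1}^d$, and $W=V^{\otimes 8}$ with basis $|i_1,\dots,i_8\rangle$. Define the (real) vectors in $W$: $\mathrm{circ}=\sum_{i_1,\dots,i_4=1}^d|i_1,i_1,i_2,i_2,i_3,i_3,i_4,i_4\rangle$, $\mathrm{tri}=\sum_{i_1,\dots,i_4=1}^d|i_1,i_2,i_2,i_1,i_3,i_4,i_4,i_3\rangle$, $\mathrm{cross}=\sum_{i_1,\dots,i_4=1}^d|i_1,i_2,i_3,i_4,i_4,i_3,i_2,i_1\rangle$; for $v\in W$ write $v_k=\langle k|v\rangle$ for basis labels $k$, and $v^T$ for the transpose (row) vector. For $U\in U(d^2)$ acting on $V\otimes V$, define the replicated ("folded") gate $G_U$ on $W\otimes W$ by identifying $W\otimes W\cong\bigotimes_{a=1}^{8}(V^{(a)}_{\rm left}\otimes V^{(a)}_{\rm right})$ (the $a$-th copy of $V$ in the first, resp. second, factor $W$) and setting $G_U=\bigotimes_{a=1}^8 U^{(a)}$, where $U^{(a)}=U$ for odd $a$ and $U^{(a)}=\bar U$ (entrywise complex conjugate in the given basis) for even $a$, each acting on $V^{(a)}_{\rm left}\otimes V^{(a)}_{\rm right}$. For basis labels $a,b,c,e$ of $W$ write $\langle c,e|G_U|a,b\rangle$ (first slot = left leg, second slot = right leg; $a$ = input-left, $b$ = input-right, $c$ = output-left, $e$ = output-right). Transfer matrices: for gates $U_1,\dots,U_x$ with $G_m=G_{U_m}$, define $R_x,L_x$ on $W^{\otimes x}$ by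 $$\langle e_1\dots e_x|R_x|a_1\dots a_x\rangle=\sum_{k_0,\dots,k_x}\mathrm{tri}_{k_0}\Big(\prod_{m=1}^x\langle k_{m-1},e_m|G_m|a_m,k_m\rangle\Big)\mathrm{circ}_{k_x},$$ $$\langle b_1\dots b_x|L_x|c_1\dots c_x\rangle=\sum_{k_0,\dots,k_x}\mathrm{circ}_{k_0}\Big(\prod_{m=1}^x\langle c_m,k_m|G_m|k_{m-1},b_m\rangle\Big)\mathrm{cross}_{k_x},$$ all sums over basis labels of $W$. Dual-unitarity: for $U\in U(d^2)$ define $\tilde U$ by $\langle ij|\tilde U|k\ell\rangle=\langle j\ell|U|ik\rangle$; $U$ is dual-unitary if both $U$ and $\tilde U$ are unitary. *)

theory Defs
  imports Complex_Main "HOL-Library.FuncSet"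
begin

text \<open>Basis labels of V = C^d are 0..d-1 (instead of 1..d).
  A two-site gate U on V (x) V is given by its matrix entries
  U i j k l = <i j| U |k l>.  A basis label of W = V^(x)8 is a function
  k :: nat => nat on {0..<8} (position t = a-1 for the a-th copy), and a
  basis label of W^(x)x is a function on {1..x} (the m-th factor belongs to the
  m-th gate) with values in the labels of W.\<close>

type_synonym gate = "nat \<Rightarrow> nat \<Rightarrow> nat \<Rightarrow> nat \<Rightarrow> complex"
type_synonym wlabel = "nat \<Rightarrow> nat"
type_synonym mlabel = "nat \<Rightarrow> wlabel"

definition Wl :: "nat \<Rightarrow> wlabel set" where
  "Wl d = PiE {..<8} (\<lambda>_. {..<d})"

definition Ml :: "nat \<Rightarrow> nat \<Rightarrow> mlabel set" where
  "Ml d x = PiE {1..x} (\<lambda>_. Wl d)"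

definition unitary_gate :: "nat \<Rightarrow> gate \<Rightarrow> bool" where
  "unitary_gate d U \<longleftrightarrow>
     (\<forall>i<d. \<forall>j<d. \<forall>k<d. \<forall>l<d.
        (\<Sum>p<d. \<Sum>q<d. cnj (U p q i j) * U p q k l) = (if i = k \<and> j = l then 1 else 0)) \<and>
     (\<forall>i<d. \<forall>j<d. \<forall>k<d. \<forall>l<d.
        (\<Sum>p<d. \<Sum>q<d. U i j p q * cnj (U k l p q)) = (if i = k \<and> j = l then 1 else 0))"

definition dual_gate :: "gate \<Rightarrow> gate" where
  "dual_gate U = (\<lambda>i j k l. U j l i k)"

definition dual_unitary :: "nat \<Rightarrow> gate \<Rightarrow> bool" where
  "dual_unitary d U \<longleftrightarrow> unitary_gate d U \<and> unitary_gate d (dual_gate U)"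

definition circ :: "wlabel \<Rightarrow> complex" where
  "circ k = (if k 0 = k 1 \<and> k 2 = k 3 \<and> k 4 = k 5 \<and> k 6 = k 7 then 1 else 0)"

definition tri :: "wlabel \<Rightarrow> complex" where
  "tri k = (if k 0 = k 3 \<and> k 1 = k 2 \<and> k 4 = k 7 \<and> k 5 = k 6 then 1 else 0)"

definition cross :: "wlabel \<Rightarrow> complex" where
  "cross k = (if k 0 = k 7 \<and> k 1 = k 6 \<and> k 2 = k 5 \<and> k 3 = k 4 then 1 else 0)"

text \<open>Folded gate: <c,e|G_U|a,b> = prod over copies t of <c_t e_t|U^(t)|a_t b_t>,
  with U^(t) = U for odd copies (t = 0,2,4,6 zero-based) and conj U for even copies.\<close>
definition gateG :: "gate \<Rightarrow> wlabel \<Rightarrow> wlabel \<Rightarrow> wlabel \<Rightarrow> wlabel \<Rightarrow> complex" where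
  "gateG U c e a b = (\<Prod>t<8. (if even t then U (c t) (e t) (a t) (b t)
                                 else cnj (U (c t) (e t) (a t) (b t))))"

text \<open>Rmat d Us x e a = <e_1..e_x|R_x|a_1..a_x>.\<close>
definition Rmat :: "nat \<Rightarrow> (nat \<Rightarrow> gate) \<Rightarrow> nat \<Rightarrow> mlabel \<Rightarrow> mlabel \<Rightarrow> complex" where
  "Rmat d Us x e a = (\<Sum>k\<in>PiE {0..x} (\<lambda>_. Wl d).
      tri (k 0) * (\<Prod>m\<in>{1..x}. gateG (Us m) (k (m - 1)) (e m) (a m) (k m)) * circ (k x))"

text \<open>Lmat d Us x b c = <b_1..b_x|L_x|c_1..c_x>.\<close>
definition Lmat :: "nat \<Rightarrow> (nat \<Rightarrow> gate) \<Rightarrow> nat \<Rightarrow> mlabel \<Rightarrow> mlabel \<Rightarrow> complex" where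
  "Lmat d Us x b c = (\<Sum>k\<in>PiE {0..x} (\<lambda>_. Wl d).
      circ (k 0) * (\<Prod>m\<in>{1..x}. gateG (Us m) (c m) (k m) (k (m - 1)) (b m)) * cross (k x))"

definition mat_vec :: "nat \<Rightarrow> nat \<Rightarrow> (mlabel \<Rightarrow> mlabel \<Rightarrow> complex) \<Rightarrow> (mlabel \<Rightarrow> complex) \<Rightarrow> mlabel \<Rightarrow> complex" where
  "mat_vec d x M v = (\<lambda>i. \<Sum>j\<in>Ml d x. M i j * v j)"

definition vec_mat :: "nat \<Rightarrow> nat \<Rightarrow> (mlabel \<Rightarrow> complex) \<Rightarrow> (mlabel \<Rightarrow> mlabel \<Rightarrow> complex) \<Rightarrow> mlabel \<Rightarrow> complex" where
  "vec_mat d x v M = (\<lambda>j. \<Sum>i\<in>Ml d x. v i * M i j)"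

definition prodvec :: "(wlabel \<Rightarrow> complex) \<Rightarrow> (wlabel \<Rightarrow> complex) \<Rightarrow> nat \<Rightarrow> nat \<Rightarrow> mlabel \<Rightarrow> complex" where
  "prodvec f g x y = (\<lambda>a. \<Prod>m\<in>{1..x}. if m \<le> y then f (a m) else g (a m))"

definition rvec :: "nat \<Rightarrow> nat \<Rightarrow> mlabel \<Rightarrow> complex" where
  "rvec x y = prodvec tri circ x y"

definition lvec :: "nat \<Rightarrow> nat \<Rightarrow> mlabel \<Rightarrow> complex" where
  "lvec x y = prodvec circ cross x y"

definition right_eig :: "nat \<Rightarrow> nat \<Rightarrow> (mlabel \<Rightarrow> mlabel \<Rightarrow> complex) \<Rightarrow> complex \<Rightarrow> (mlabel \<Rightarrow> complex) \<Rightarrow> bool" where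
  "right_eig d x M ev v \<longleftrightarrow> (\<forall>i\<in>Ml d x. mat_vec d x M v i = ev * v i)"

definition left_eig :: "nat \<Rightarrow> nat \<Rightarrow> (mlabel \<Rightarrow> mlabel \<Rightarrow> complex) \<Rightarrow> complex \<Rightarrow> (mlabel \<Rightarrow> complex) \<Rightarrow> bool" where
  "left_eig d x M ev v \<longleftrightarrow> (\<forall>j\<in>Ml d x. vec_mat d x v M j = ev * v j)"

definition lin_indep_family :: "nat \<Rightarrow> nat \<Rightarrow> (nat \<Rightarrow> mlabel \<Rightarrow> complex) \<Rightarrow> bool" where
  "lin_indep_family d x vs \<longleftrightarrow>
     (\<forall>c :: nat \<Rightarrow> complex. (\<forall>a\<in>Ml d x. (\<Sum>y\<le>x. c y * vs y a) = 0) \<longrightarrow> (\<forall>y\<le>x. c y = 0))"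

end

theory Submission
  imports Defs
begin

text \<open>The vectors circ, tri and cross are pairing states: each identifies the eight replicas
  in four pairs (by reversing blocks of length 2, 4 and 8), every pair joining a copy of U
  with a copy of its conjugate. Contracting two legs of a folded gate with a pairing state
  therefore produces, pair by pair, an entry of U U* or U* U (for the input or output legs)
  or of the same products for the dual gate (for the two left or the two right legs), and
  leaves the same pairing state on the two remaining legs. Hence unitarity lets a pairing
  state pass through a gate vertically and dual-unitarity horizontally. Contracting R_x with
  r_y, the boundary tri travels through the first y gates and the boundary circ through the
  last x - y, so the transfer chain collapses to the overlap of tri and circ, which counts the
  labels constant on two blocks of four replicas, namely d^2. The other three cases are
  identical, and for y = 0 or y = x only unitarity is used. Linear independence follows by
  evaluating at labels on which the product vectors form a diagonal system.\<close>

definition chainsum ::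
    "'s set \<Rightarrow> nat \<Rightarrow> ('s \<Rightarrow> complex) \<Rightarrow> (nat \<Rightarrow> 's \<Rightarrow> 's \<Rightarrow> complex) \<Rightarrow> ('s \<Rightarrow> complex) \<Rightarrow> complex"
  where
  "chainsum S n \<alpha> H \<beta> =
     (\<Sum>k\<in>PiE {0..n} (\<lambda>_. S). \<alpha> (k 0) * (\<Prod>m\<in>{1..n}. H m (k (m - 1)) (k m)) * \<beta> (k n))"

lemma chainsum_0: "chainsum S 0 \<alpha> H \<beta> = (\<Sum>z\<in>S. \<alpha> z * \<beta> z)"
  unfolding chainsum_def
  by (rule sum.reindex_bij_witness[where i="\<lambda>z. (\<lambda>t\<in>{0}. z)" and j="\<lambda>k. k 0"])
     (auto simp: PiE_def extensional_def)

lemma chainsum_Suc: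
  assumes "finite S"
  shows "chainsum S (Suc n) \<alpha> H \<beta> = chainsum S n \<alpha> H (\<lambda>z. \<Sum>w\<in>S. H (Suc n) z w * \<beta> w)"
proof -
  let ?F = "\<lambda>k. \<alpha> (k 0) * (\<Prod>m\<in>{1..n}. H m (k (m - 1)) (k m))"
  have "chainsum S (Suc n) \<alpha> H \<beta> =
      (\<Sum>(w, k)\<in>S \<times> PiE {0..n} (\<lambda>_. S). ?F k * H (Suc n) (k n) w * \<beta> w)"
    unfolding chainsum_def
  proof (rule sum.reindex_bij_witness[where i="\<lambda>(w, k). k(Suc n := w)"
        and j="\<lambda>k. (k (Suc n), restrict k {0..n})"])
    fix k assume "k \<in> PiE {0..Suc n} (\<lambda>_. S)"
    have "(\<Prod>m\<in>{1..n}. H m (restrict k {0..n} (m - 1)) (restrict k {0..n} m)) =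
        (\<Prod>m\<in>{1..n}. H m (k (m - 1)) (k m))"
      by (rule prod.cong) auto
    then show "(case (k (Suc n), restrict k {0..n}) of (w, k) \<Rightarrow> ?F k * H (Suc n) (k n) w * \<beta> w) =
        \<alpha> (k 0) * (\<Prod>m\<in>{1..Suc n}. H m (k (m - 1)) (k m)) * \<beta> (k (Suc n))"
      by (simp add: prod.nat_ivl_Suc' mult_ac)
  qed (auto simp: PiE_def extensional_def)
  also have "\<dots> = (\<Sum>k\<in>PiE {0..n} (\<lambda>_. S). \<Sum>w\<in>S. ?F k * H (Suc n) (k n) w * \<beta> w)"
    by (simp only: sum.cartesian_product[symmetric]) (rule sum.swap)
  also have "\<dots> = chainsum S n \<alpha> H (\<lambda>z. \<Sum>w\<in>S. H (Suc n) z w * \<beta> w)"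
    unfolding chainsum_def by (simp add: sum_distrib_left mult.assoc)
  finally show ?thesis .
qed

lemma chainsum_left_eigen:
  assumes "finite S"
    and "\<And>m z. m \<in> {1..n} \<Longrightarrow> z \<in> S \<Longrightarrow> (\<Sum>z'\<in>S. \<alpha> z' * H m z' z) = u m * \<alpha> z"
  shows "chainsum S n \<alpha> H \<beta> = (\<Prod>m\<in>{1..n}. u m) * (\<Sum>z\<in>S. \<alpha> z * \<beta> z)"
  using assms(2)
proof (induction n arbitrary: \<beta>)
  case 0
  then show ?case by (simp add: chainsum_0)
next
  case (Suc n)
  have "chainsum S (Suc n) \<alpha> H \<beta> =
      (\<Prod>m\<in>{1..n}. u m) * (\<Sum>z\<in>S. \<alpha> z * (\<Sum>w\<in>S. H (Suc n) z w * \<beta> w))"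
    using Suc by (simp add: chainsum_Suc[OF assms(1)])
  also have "(\<Sum>z\<in>S. \<alpha> z * (\<Sum>w\<in>S. H (Suc n) z w * \<beta> w)) =
      (\<Sum>w\<in>S. (\<Sum>z\<in>S. \<alpha> z * H (Suc n) z w) * \<beta> w)"
    unfolding sum_distrib_left sum_distrib_right by (subst sum.swap) (simp add: mult.assoc)
  also have "\<dots> = u (Suc n) * (\<Sum>w\<in>S. \<alpha> w * \<beta> w)"
    using Suc.prems by (simp add: sum_distrib_left mult.assoc)
  finally show ?case
    by (simp add: prod.nat_ivl_Suc' mult_ac)
qed

lemma chainsum_right_eigen:
  assumes "finite S" "j \<le> n"
    and "\<And>m z. m \<in> {Suc j..n} \<Longrightarrow> z \<in> S \<Longrightarrow> (\<Sum>w\<in>S. H m z w * \<beta> w) = u m * \<beta> z"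
  shows "chainsum S n \<alpha> H \<beta> = (\<Prod>m\<in>{Suc j..n}. u m) * chainsum S j \<alpha> H \<beta>"
  using assms(2,3)
proof (induction n rule: dec_induct)
  case base
  then show ?case by simp
next
  case (step n)
  have "chainsum S (Suc n) \<alpha> H \<beta> = chainsum S n \<alpha> H (\<lambda>z. \<Sum>w\<in>S. H (Suc n) z w * \<beta> w)"
    by (rule chainsum_Suc[OF assms(1)])
  also have "\<dots> = chainsum S n \<alpha> H (\<lambda>z. u (Suc n) * \<beta> z)"
    unfolding chainsum_def using step.prems step.hyps by (intro sum.cong refl) (simp add: PiE_iff)
  also have "\<dots> = u (Suc n) * chainsum S n \<alpha> H \<beta>"
    unfolding chainsum_def by (simp add: sum_distrib_left mult_ac)
  finally show ?case
    using step by (simp add: prod.nat_ivl_Suc' mult_ac)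
qed

lemma chainsum_eigen:
  assumes "finite S" "y \<le> n"
    and "\<And>m z. m \<in> {1..y} \<Longrightarrow> z \<in> S \<Longrightarrow> (\<Sum>z'\<in>S. \<alpha> z' * H m z' z) = u m * \<alpha> z"
    and "\<And>m z. m \<in> {Suc y..n} \<Longrightarrow> z \<in> S \<Longrightarrow> (\<Sum>w\<in>S. H m z w * \<beta> w) = u m * \<beta> z"
  shows "chainsum S n \<alpha> H \<beta> = (\<Prod>m\<in>{1..n}. u m) * (\<Sum>z\<in>S. \<alpha> z * \<beta> z)"
proof -
  have "{1..n} = {1..y} \<union> {Suc y..n}" "{1..y} \<inter> {Suc y..n} = {}"
    using assms(2) by auto
  then have "(\<Prod>m\<in>{1..n}. u m) = (\<Prod>m\<in>{Suc y..n}. u m) * (\<Prod>m\<in>{1..y}. u m)"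
    by (simp add: prod.union_disjoint mult.commute)
  then show ?thesis
    using chainsum_right_eigen[OF assms(1,2,4)] chainsum_left_eigen[OF assms(1,3)]
    by (simp add: mult.assoc)
qed

lemma sum_PiE_chainsum_prod:
  assumes "finite S'"
  shows "(\<Sum>j\<in>PiE {1..n} (\<lambda>_. S'). chainsum S n \<alpha> (\<lambda>m. K m (j m)) \<beta> * (\<Prod>m\<in>{1..n}. Q m (j m))) =
    chainsum S n \<alpha> (\<lambda>m z' z. \<Sum>s\<in>S'. K m s z' z * Q m s) \<beta>"
proof -
  have "(\<Sum>j\<in>PiE {1..n} (\<lambda>_. S'). chainsum S n \<alpha> (\<lambda>m. K m (j m)) \<beta> * (\<Prod>m\<in>{1..n}. Q m (j m))) =
      (\<Sum>k\<in>PiE {0..n} (\<lambda>_. S). \<alpha> (k 0) * \<beta> (k n) *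
         (\<Sum>j\<in>PiE {1..n} (\<lambda>_. S'). \<Prod>m\<in>{1..n}. K m (j m) (k (m - 1)) (k m) * Q m (j m)))"
    unfolding chainsum_def sum_distrib_right sum_distrib_left
    by (subst sum.swap) (simp add: prod.distrib mult_ac)
  also have "\<dots> = chainsum S n \<alpha> (\<lambda>m z' z. \<Sum>s\<in>S'. K m s z' z * Q m s) \<beta>"
    unfolding chainsum_def using assms by (simp add: prod_sum_PiE mult_ac)
  finally show ?thesis .
qed

lemma all_less_eight:
  "(\<forall>t<8. P (t::nat)) \<longleftrightarrow> P 0 \<and> P 1 \<and> P 2 \<and> P 3 \<and> P 4 \<and> P 5 \<and> P 6 \<and> P 7"
  by (simp add: less_Suc_eq numeral_eq_Suc all_conj_distrib)

definition parity_pairing :: "(nat \<Rightarrow> nat) \<Rightarrow> bool" where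
  "parity_pairing \<sigma> \<longleftrightarrow> (\<forall>t<8. \<sigma> t < 8 \<and> \<sigma> (\<sigma> t) = t \<and> (even (\<sigma> t) \<longleftrightarrow> odd t))"

definition pairing_state :: "(nat \<Rightarrow> nat) \<Rightarrow> wlabel \<Rightarrow> complex" where
  "pairing_state \<sigma> k = (if \<forall>t<8. k t = k (\<sigma> t) then 1 else 0)"

definition even_copies :: "nat set" where
  "even_copies = {t. t < 8 \<and> even t}"

lemma finite_even_copies [simp]: "finite even_copies"
  by (simp add: even_copies_def)

lemma parity_pairingD:
  assumes "parity_pairing \<sigma>" "t \<in> even_copies"
  shows "t < 8" "even t" "\<sigma> t < 8" "odd (\<sigma> t)" "\<sigma> (\<sigma> t) = t"
  using assms by (auto simp: parity_pairing_def even_copies_def)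

lemma parity_pairing_odd:
  assumes "parity_pairing \<sigma>" "t < 8" "odd t"
  shows "\<sigma> t \<in> even_copies" "\<sigma> (\<sigma> t) = t"
  using assms by (auto simp: parity_pairing_def even_copies_def)

lemma lessThan_8_eq_even_copies_Un:
  assumes "parity_pairing \<sigma>"
  shows "{..<8} = even_copies \<union> \<sigma> ` even_copies"
proof (intro equalityI subsetI)
  fix t :: nat assume "t \<in> {..<8}"
  then show "t \<in> even_copies \<union> \<sigma> ` even_copies"
    using parity_pairing_odd[OF assms, of t]
    by (cases "even t") (auto simp: even_copies_def intro: rev_image_eqI)
qed (auto dest: parity_pairingD[OF assms])

lemma prod_lessThan_8_pairs:
  assumes "parity_pairing \<sigma>"
  shows "(\<Prod>t<8. f t) = (\<Prod>t\<in>even_copies. f t * f (\<sigma> t))"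
proof -
  have "even_copies \<inter> \<sigma> ` even_copies = {}"
    using parity_pairingD(2,4)[OF assms] by fastforce
  moreover have "inj_on \<sigma> even_copies"
    by (rule inj_on_inverseI[where g=\<sigma>]) (rule parity_pairingD(5)[OF assms])
  ultimately show ?thesis
    unfolding lessThan_8_eq_even_copies_Un[OF assms]
    by (simp add: prod.union_disjoint prod.reindex prod.distrib)
qed

lemma pairing_state_eq_prod:
  assumes "parity_pairing \<sigma>"
  shows "pairing_state \<sigma> k = (\<Prod>t\<in>even_copies. if k t = k (\<sigma> t) then 1 else 0)"
proof -
  have "(\<forall>t<8. k t = k (\<sigma> t)) \<longleftrightarrow> (\<forall>t\<in>even_copies. k t = k (\<sigma> t))"
  proof
    assume "\<forall>t<8. k t = k (\<sigma> t)"
    then show "\<forall>t\<in>even_copies. k t = k (\<sigma> t)"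
      using parity_pairingD(1)[OF assms] by blast
  next
    assume pairs: "\<forall>t\<in>even_copies. k t = k (\<sigma> t)"
    show "\<forall>t<8. k t = k (\<sigma> t)"
    proof (intro allI impI)
      fix t :: nat assume "t < 8"
      then consider "t \<in> even_copies" | "\<sigma> t \<in> even_copies" "\<sigma> (\<sigma> t) = t"
        using parity_pairing_odd[OF assms] by (auto simp: even_copies_def)
      then show "k t = k (\<sigma> t)"
        by cases (metis pairs)+
    qed
  qed
  then show ?thesis
    unfolding pairing_state_def by (simp add: prod.neutral prod_zero)
qed

lemma mem_Wl_iff: "a \<in> Wl d \<longleftrightarrow> (\<forall>t<8. a t < d) \<and> (\<forall>t\<ge>8. a t = undefined)"
  by (auto simp: Wl_def PiE_iff extensional_def)

lemma finite_Wl [simp]: "finite (Wl d)"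
  by (simp add: Wl_def finite_PiE)

lemma sum_Wl_prod_pairs:
  fixes h :: "nat \<Rightarrow> nat \<Rightarrow> nat \<Rightarrow> 'a::comm_semiring_1"
  assumes pairing: "parity_pairing \<sigma>"
  shows "(\<Sum>a\<in>Wl d. \<Prod>t\<in>even_copies. h t (a t) (a (\<sigma> t))) =
    (\<Prod>t\<in>even_copies. \<Sum>i<d. \<Sum>j<d. h t i j)"
proof -
  let ?P = "PiE even_copies (\<lambda>_. {..<d} \<times> {..<d})"
  let ?split = "\<lambda>a. \<lambda>t\<in>even_copies. (a t, a (\<sigma> t))"
  let ?join = "\<lambda>\<beta> t. if t < 8 then if even t then fst (\<beta> t) else snd (\<beta> (\<sigma> t)) else undefined"
  note pairingD = parity_pairingD[OF pairing] parity_pairing_odd[OF pairing]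
  have copies: "t \<in> even_copies \<or> (odd t \<and> \<sigma> t \<in> even_copies \<and> \<sigma> (\<sigma> t) = t)" if "t < 8" for t
    using that pairingD(6,7)[of t] by (auto simp: even_copies_def)
  have "(\<Sum>a\<in>Wl d. \<Prod>t\<in>even_copies. h t (a t) (a (\<sigma> t))) =
      (\<Sum>\<beta>\<in>?P. \<Prod>t\<in>even_copies. case_prod (h t) (\<beta> t))"
  proof (rule sum.reindex_bij_witness[where j="?split" and i="?join"])
    fix a assume a: "a \<in> Wl d"
    show "?join (?split a) = a"
    proof
      fix t
      show "?join (?split a) t = a t"
      proof (cases "t < 8")
        case True
        with copies[OF True] pairingD(1,2)[of t] show ?thesis by auto
      qed (use a in \<open>simp add: mem_Wl_iff\<close>)
    qed
    show "?split a \<in> ?P"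
      using a pairingD(1,3) by (simp add: mem_Wl_iff)
    show "(\<Prod>t\<in>even_copies. case_prod (h t) (?split a t)) = (\<Prod>t\<in>even_copies. h t (a t) (a (\<sigma> t)))"
      by simp
  next
    fix \<beta> assume \<beta>: "\<beta> \<in> ?P"
    show "?split (?join \<beta>) = \<beta>"
    proof
      fix t
      show "?split (?join \<beta>) t = \<beta> t"
      proof (cases "t \<in> even_copies")
        case True
        then show ?thesis using pairingD(1-5)[OF True] by simp
      qed (use \<beta> in \<open>simp add: PiE_iff extensional_def\<close>)
    qed
    have "?join \<beta> t < d" if "t < 8" for t
      using that copies[OF that] \<beta> by (auto simp: PiE_iff even_copies_def mem_Times_iff)
    then show "?join \<beta> \<in> Wl d"
      by (simp add: mem_Wl_iff)
  qed
  also have "\<dots> = (\<Prod>t\<in>even_copies. \<Sum>p\<in>{..<d} \<times> {..<d}. case_prod (h t) p)"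
    by (rule prod_sum_PiE[where f="\<lambda>t. case_prod (h t)", symmetric]) simp_all
  also have "\<dots> = (\<Prod>t\<in>even_copies. \<Sum>i<d. \<Sum>j<d. h t i j)"
    by (simp add: sum.cartesian_product)
  finally show ?thesis .
qed

lemma sum_Wl_pairing_state:
  assumes "parity_pairing \<sigma>"
  shows "(\<Sum>a\<in>Wl d. pairing_state \<sigma> a * (\<Prod>t\<in>even_copies. g t (a t) (a (\<sigma> t)))) =
    (\<Prod>t\<in>even_copies. \<Sum>i<d. g t i i)"
proof -
  have "(\<Sum>a\<in>Wl d. pairing_state \<sigma> a * (\<Prod>t\<in>even_copies. g t (a t) (a (\<sigma> t)))) =
      (\<Sum>a\<in>Wl d. \<Prod>t\<in>even_copies. if a t = a (\<sigma> t) then g t (a t) (a (\<sigma> t)) else 0)"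
    by (simp add: pairing_state_eq_prod[OF assms] prod.distrib[symmetric] if_distrib[of "\<lambda>x. x * _"]
        cong: if_cong)
  also have "\<dots> = (\<Prod>t\<in>even_copies. \<Sum>i<d. \<Sum>j<d. if i = j then g t i j else 0)"
    by (rule sum_Wl_prod_pairs[OF assms])
  finally show ?thesis
    by simp
qed

lemma sum2_Wl_pairing_states:
  assumes "parity_pairing \<sigma>"
  shows "(\<Sum>a\<in>Wl d. \<Sum>b\<in>Wl d. pairing_state \<sigma> a * pairing_state \<sigma> b * (\<Prod>t<8. h t (a t) (b t))) =
    (\<Prod>t\<in>even_copies. \<Sum>i<d. \<Sum>j<d. h t i j * h (\<sigma> t) i j)"
proof -
  have "(\<Sum>b\<in>Wl d. pairing_state \<sigma> b * (\<Prod>t<8. h t (a t) (b t))) =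
      (\<Prod>t\<in>even_copies. \<Sum>j<d. h t (a t) j * h (\<sigma> t) (a (\<sigma> t)) j)" for a
    using sum_Wl_pairing_state[OF assms, where g="\<lambda>t j j'. h t (a t) j * h (\<sigma> t) (a (\<sigma> t)) j'"]
    by (simp add: prod_lessThan_8_pairs[OF assms])
  then have "(\<Sum>a\<in>Wl d. \<Sum>b\<in>Wl d. pairing_state \<sigma> a * pairing_state \<sigma> b * (\<Prod>t<8. h t (a t) (b t))) =
      (\<Sum>a\<in>Wl d. pairing_state \<sigma> a * (\<Prod>t\<in>even_copies. \<Sum>j<d. h t (a t) j * h (\<sigma> t) (a (\<sigma> t)) j))"
    by (simp add: mult.assoc flip: sum_distrib_left)
  also have "\<dots> = (\<Prod>t\<in>even_copies. \<Sum>i<d. \<Sum>j<d. h t i j * h (\<sigma> t) i j)"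
    by (rule sum_Wl_pairing_state[OF assms])
  finally show ?thesis .
qed

definition orthonormal_rows :: "nat \<Rightarrow> gate \<Rightarrow> bool" where
  "orthonormal_rows d V \<longleftrightarrow> (\<forall>i<d. \<forall>j<d. \<forall>k<d. \<forall>l<d.
     (\<Sum>p<d. \<Sum>q<d. V i j p q * cnj (V k l p q)) = (if i = k \<and> j = l then 1 else 0))"

definition gate_adjoint :: "gate \<Rightarrow> gate" where
  "gate_adjoint U = (\<lambda>i j k l. cnj (U k l i j))"

lemma unitary_gate_iff_orthonormal_rows:
  "unitary_gate d U \<longleftrightarrow> orthonormal_rows d U \<and> orthonormal_rows d (gate_adjoint U)"
  unfolding unitary_gate_def orthonormal_rows_def gate_adjoint_def by auto

lemma gateG_gate_adjoint: "gateG (gate_adjoint U) a b c e = cnj (gateG U c e a b)"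
  unfolding gateG_def gate_adjoint_def by (simp add: if_distrib)

lemma gateG_dual_gate: "gateG (dual_gate U) a c b e = gateG U c e a b"
  unfolding gateG_def dual_gate_def ..

lemma cnj_pairing_state [simp]: "cnj (pairing_state \<sigma> k) = pairing_state \<sigma> k"
  by (simp add: pairing_state_def)

lemma gateG_contract_orthonormal_rows:
  assumes V: "orthonormal_rows d V" and \<sigma>: "parity_pairing \<sigma>" and "c \<in> Wl d" "e \<in> Wl d"
  shows "(\<Sum>a\<in>Wl d. \<Sum>b\<in>Wl d. pairing_state \<sigma> a * pairing_state \<sigma> b * gateG V c e a b) =
    pairing_state \<sigma> c * pairing_state \<sigma> e"
proof -
  define h where "h t i j = (if even t then V (c t) (e t) i j else cnj (V (c t) (e t) i j))" for t i j
  have "(\<Sum>i<d. \<Sum>j<d. h t i j * h (\<sigma> t) i j) = (if c t = c (\<sigma> t) \<and> e t = e (\<sigma> t) then 1 else 0)"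
    if "t \<in> even_copies" for t
  proof -
    have "c t < d" "e t < d" "c (\<sigma> t) < d" "e (\<sigma> t) < d"
      using assms(3,4) parity_pairingD(1,3)[OF \<sigma> that] by (simp_all add: mem_Wl_iff)
    then show ?thesis
      using V parity_pairingD(2,4)[OF \<sigma> that] unfolding orthonormal_rows_def h_def by simp
  qed
  then have "(\<Prod>t\<in>even_copies. \<Sum>i<d. \<Sum>j<d. h t i j * h (\<sigma> t) i j) =
      pairing_state \<sigma> c * pairing_state \<sigma> e"
    unfolding pairing_state_eq_prod[OF \<sigma>] prod.distrib[symmetric] by (intro prod.cong refl) simp
  moreover have "gateG V c e a b = (\<Prod>t<8. h t (a t) (b t))" for a b
    unfolding gateG_def h_def ..
  ultimately show ?thesis
    by (simp add: sum2_Wl_pairing_states[OF \<sigma>])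
qed

lemma gateG_cnj_contract_orthonormal_rows:
  assumes "orthonormal_rows d V" "parity_pairing \<sigma>" "c \<in> Wl d" "e \<in> Wl d"
  shows "(\<Sum>a\<in>Wl d. \<Sum>b\<in>Wl d.
      pairing_state \<sigma> a * pairing_state \<sigma> b * cnj (gateG V c e a b)) =
    pairing_state \<sigma> c * pairing_state \<sigma> e"
  using arg_cong[OF gateG_contract_orthonormal_rows[OF assms], of cnj] by simp

lemma gateG_contract_inputs:
  assumes "unitary_gate d U" "parity_pairing \<sigma>" "c \<in> Wl d" "e \<in> Wl d"
  shows "(\<Sum>a\<in>Wl d. \<Sum>b\<in>Wl d. pairing_state \<sigma> a * pairing_state \<sigma> b * gateG U c e a b) =
    pairing_state \<sigma> c * pairing_state \<sigma> e"
  using assms gateG_contract_orthonormal_rows unitary_gate_iff_orthonormal_rows by blast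

lemma gateG_contract_outputs:
  assumes "unitary_gate d U" "parity_pairing \<sigma>" "a \<in> Wl d" "b \<in> Wl d"
  shows "(\<Sum>c\<in>Wl d. \<Sum>e\<in>Wl d. pairing_state \<sigma> c * pairing_state \<sigma> e * gateG U c e a b) =
    pairing_state \<sigma> a * pairing_state \<sigma> b"
  using assms gateG_cnj_contract_orthonormal_rows[of d "gate_adjoint U" \<sigma> a b]
  by (simp add: unitary_gate_iff_orthonormal_rows gateG_gate_adjoint)

lemma gateG_contract_left:
  assumes "unitary_gate d (dual_gate U)" "parity_pairing \<sigma>" "b \<in> Wl d" "e \<in> Wl d"
  shows "(\<Sum>a\<in>Wl d. \<Sum>c\<in>Wl d. pairing_state \<sigma> a * pairing_state \<sigma> c * gateG U c e a b) =
    pairing_state \<sigma> b * pairing_state \<sigma> e"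
  using assms gateG_cnj_contract_orthonormal_rows[of d "gate_adjoint (dual_gate U)" \<sigma> b e]
  by (simp add: unitary_gate_iff_orthonormal_rows gateG_gate_adjoint gateG_dual_gate)

lemma gateG_contract_right:
  assumes "unitary_gate d (dual_gate U)" "parity_pairing \<sigma>" "a \<in> Wl d" "c \<in> Wl d"
  shows "(\<Sum>b\<in>Wl d. \<Sum>e\<in>Wl d. pairing_state \<sigma> b * pairing_state \<sigma> e * gateG U c e a b) =
    pairing_state \<sigma> a * pairing_state \<sigma> c"
  using assms gateG_contract_orthonormal_rows[of d "dual_gate U" \<sigma> a c]
  by (simp add: unitary_gate_iff_orthonormal_rows gateG_dual_gate)

lemma lessThan_eight_eq: "{..<8::nat} = {0, 1, 2, 3, 4, 5, 6, 7}"
  by auto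

text \<open>The mirror image of t inside its block of length n, i.e. n * (t div n) + (n - 1 - t mod n),
  written without div so that the simplifier evaluates it on numerals.\<close>

definition block_reversal :: "nat \<Rightarrow> nat \<Rightarrow> nat" where
  "block_reversal n t = t + n - 1 - 2 * (t mod n)"

lemma parity_pairing_block_reversal:
  "parity_pairing (block_reversal 2)" "parity_pairing (block_reversal 4)"
  "parity_pairing (block_reversal 8)"
  by (simp_all add: parity_pairing_def all_less_eight block_reversal_def)

lemma circ_eq_pairing_state: "circ = pairing_state (block_reversal 2)"
proof
  fix k :: wlabel
  have "(\<forall>t<8. k t = k (block_reversal 2 t)) \<longleftrightarrow> k 0 = k 1 \<and> k 2 = k 3 \<and> k 4 = k 5 \<and> k 6 = k 7"
    unfolding all_less_eight by (auto simp: block_reversal_def)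
  then show "circ k = pairing_state (block_reversal 2) k"
    by (simp add: circ_def pairing_state_def)
qed

lemma tri_eq_pairing_state: "tri = pairing_state (block_reversal 4)"
proof
  fix k :: wlabel
  have "(\<forall>t<8. k t = k (block_reversal 4 t)) \<longleftrightarrow> k 0 = k 3 \<and> k 1 = k 2 \<and> k 4 = k 7 \<and> k 5 = k 6"
    unfolding all_less_eight by (auto simp: block_reversal_def)
  then show "tri k = pairing_state (block_reversal 4) k"
    by (simp add: tri_def pairing_state_def)
qed

lemma cross_eq_pairing_state: "cross = pairing_state (block_reversal 8)"
proof
  fix k :: wlabel
  have "(\<forall>t<8. k t = k (block_reversal 8 t)) \<longleftrightarrow> k 0 = k 7 \<and> k 1 = k 6 \<and> k 2 = k 5 \<and> k 3 = k 4"
    unfolding all_less_eight by (auto simp: block_reversal_def)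
  then show "cross k = pairing_state (block_reversal 8) k"
    by (simp add: cross_def pairing_state_def)
qed

lemma sum_Wl_block_constant:
  assumes r: "\<forall>t<8. r t < 8 \<and> r (r t) = r t"
  shows "(\<Sum>z\<in>Wl d. if \<forall>t<8. z t = z (r t) then 1 else 0) =
    (of_nat d ^ card (r ` {..<8}) :: complex)"
proof -
  let ?R = "r ` {..<8}" and ?Z = "{z\<in>Wl d. \<forall>t<8. z t = z (r t)}"
  let ?extend = "\<lambda>\<alpha> t. if t < 8 then \<alpha> (r t) else undefined"
  have R: "s < 8" "r s = s" if "s \<in> ?R" for s
    using that r by auto
  have "(\<Sum>z\<in>Wl d. if \<forall>t<8. z t = z (r t) then 1 else 0) = (\<Sum>z\<in>?Z. 1 :: complex)"
    by (rule sum.inter_filter[symmetric]) simp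
  also have "\<dots> = (\<Sum>\<alpha>\<in>PiE ?R (\<lambda>_. {..<d}). 1)"
  proof (rule sum.reindex_bij_witness[where j="\<lambda>z. restrict z ?R" and i="?extend"])
    fix z assume "z \<in> ?Z"
    then have z: "z \<in> Wl d" "\<And>t. t < 8 \<Longrightarrow> z (r t) = z t"
      by auto
    show "?extend (restrict z ?R) = z"
    proof
      fix t
      show "?extend (restrict z ?R) t = z t"
        using z by (cases "t < 8") (simp_all add: mem_Wl_iff)
    qed
    have "z s < d" if "s \<in> ?R" for s
      using z(1) R(1)[OF that] by (simp add: mem_Wl_iff)
    then show "restrict z ?R \<in> PiE ?R (\<lambda>_. {..<d})"
      by (simp only: restrict_PiE_iff lessThan_iff) blast
  next
    fix \<alpha> assume \<alpha>: "\<alpha> \<in> PiE ?R (\<lambda>_. {..<d})"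
    show "restrict (?extend \<alpha>) ?R = \<alpha>"
    proof
      fix s
      show "restrict (?extend \<alpha>) ?R s = \<alpha> s"
      proof (cases "s \<in> ?R")
        case True
        then show ?thesis using R[OF True] by simp
      next
        case False
        then show ?thesis using \<alpha> by (simp add: PiE_iff extensional_def)
      qed
    qed
    have "?extend \<alpha> t < d" if "t < 8" for t
      using \<alpha> that by auto
    then show "?extend \<alpha> \<in> ?Z"
      using r by (simp add: mem_Wl_iff)
  qed simp
  also have "\<dots> = of_nat d ^ card ?R"
    by (simp add: card_PiE)
  finally show ?thesis .
qed

lemma inner_tri_circ: "(\<Sum>z\<in>Wl d. tri z * circ z) = of_nat (d\<^sup>2)"
proof -
  let ?r = "\<lambda>t::nat. 4 * (t div 4) :: nat"
  have r: "\<forall>t<8. ?r t < 8 \<and> ?r (?r t) = ?r t"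
    by (simp add: all_less_eight)
  have blocks: "(\<forall>t<8. z t = z (?r t)) \<longleftrightarrow>
      (z 0 = z 3 \<and> z 1 = z 2 \<and> z 4 = z 7 \<and> z 5 = z 6) \<and>
      (z 0 = z 1 \<and> z 2 = z 3 \<and> z 4 = z 5 \<and> z 6 = z 7)"
    for z :: wlabel
    unfolding all_less_eight by auto
  have "tri z * circ z = (if \<forall>t<8. z t = z (?r t) then 1 else 0)" for z
    unfolding blocks tri_def circ_def of_bool_def[symmetric] of_bool_conj ..
  then have "(\<Sum>z\<in>Wl d. tri z * circ z) = (\<Sum>z\<in>Wl d. if \<forall>t<8. z t = z (?r t) then 1 else 0)"
    by (intro sum.cong refl)
  also have "\<dots> = of_nat d ^ card (?r ` {..<8})"
    by (rule sum_Wl_block_constant[OF r])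
  also have "card (?r ` {..<8}) = 2"
    by (simp add: lessThan_eight_eq)
  finally show ?thesis
    by simp
qed

lemma inner_circ_cross: "(\<Sum>z\<in>Wl d. circ z * cross z) = of_nat (d\<^sup>2)"
proof -
  let ?r = "\<lambda>t::nat. if t < 2 \<or> 5 < t then 0 else 2 :: nat"
  have r: "\<forall>t<8. ?r t < 8 \<and> ?r (?r t) = ?r t"
    by (simp add: all_less_eight)
  have blocks: "(\<forall>t<8. z t = z (?r t)) \<longleftrightarrow>
      (z 0 = z 1 \<and> z 2 = z 3 \<and> z 4 = z 5 \<and> z 6 = z 7) \<and>
      (z 0 = z 7 \<and> z 1 = z 6 \<and> z 2 = z 5 \<and> z 3 = z 4)"
    for z :: wlabel
    unfolding all_less_eight by auto
  have "circ z * cross z = (if \<forall>t<8. z t = z (?r t) then 1 else 0)" for z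
    unfolding blocks circ_def cross_def of_bool_def[symmetric] of_bool_conj ..
  then have "(\<Sum>z\<in>Wl d. circ z * cross z) = (\<Sum>z\<in>Wl d. if \<forall>t<8. z t = z (?r t) then 1 else 0)"
    by (intro sum.cong refl)
  also have "\<dots> = of_nat d ^ card (?r ` {..<8})"
    by (rule sum_Wl_block_constant[OF r])
  also have "card (?r ` {..<8}) = 2"
    by (simp add: lessThan_eight_eq)
  finally show ?thesis
    by simp
qed

lemma sum_PiE_chainsum_prodvec:
  assumes "finite S" "y \<le> x" "i \<in> PiE {1..x} (\<lambda>_. S)"
    and left: "\<And>m i z. m \<in> {1..y} \<Longrightarrow> i \<in> S \<Longrightarrow> z \<in> S \<Longrightarrow>
      (\<Sum>z'\<in>S. \<Sum>s\<in>S. \<alpha> z' * \<alpha> s * K m i s z' z) = \<alpha> i * \<alpha> z"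
    and right: "\<And>m i z. m \<in> {Suc y..x} \<Longrightarrow> i \<in> S \<Longrightarrow> z \<in> S \<Longrightarrow>
      (\<Sum>s\<in>S. \<Sum>w\<in>S. \<beta> s * \<beta> w * K m i s z w) = \<beta> i * \<beta> z"
  shows "(\<Sum>j\<in>PiE {1..x} (\<lambda>_. S). chainsum S x \<alpha> (\<lambda>m. K m (i m) (j m)) \<beta> * prodvec \<alpha> \<beta> x y j) =
    (\<Sum>z\<in>S. \<alpha> z * \<beta> z) * prodvec \<alpha> \<beta> x y i"
proof -
  define Q where "Q m s = (if m \<le> y then \<alpha> s else \<beta> s)" for m s
  have i: "i m \<in> S" if "m \<in> {1..x}" for m
    using assms(3) that by auto
  have "(\<Sum>j\<in>PiE {1..x} (\<lambda>_. S). chainsum S x \<alpha> (\<lambda>m. K m (i m) (j m)) \<beta> * prodvec \<alpha> \<beta> x y j) =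
      chainsum S x \<alpha> (\<lambda>m z' z. \<Sum>s\<in>S. K m (i m) s z' z * Q m s) \<beta>"
    unfolding prodvec_def Q_def by (rule sum_PiE_chainsum_prod[OF assms(1)])
  also have "\<dots> = (\<Prod>m\<in>{1..x}. Q m (i m)) * (\<Sum>z\<in>S. \<alpha> z * \<beta> z)"
  proof (rule chainsum_eigen[OF assms(1,2)])
    fix m z assume m: "m \<in> {1..y}" and z: "z \<in> S"
    have "(\<Sum>z'\<in>S. \<alpha> z' * (\<Sum>s\<in>S. K m (i m) s z' z * Q m s)) =
        (\<Sum>z'\<in>S. \<Sum>s\<in>S. \<alpha> z' * \<alpha> s * K m (i m) s z' z)"
      using m by (simp add: Q_def sum_distrib_left mult_ac)
    also have "\<dots> = Q m (i m) * \<alpha> z"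
      using left[OF m i z] m assms(2) by (simp add: Q_def)
    finally show "(\<Sum>z'\<in>S. \<alpha> z' * (\<Sum>s\<in>S. K m (i m) s z' z * Q m s)) = Q m (i m) * \<alpha> z" .
  next
    fix m z assume m: "m \<in> {Suc y..x}" and z: "z \<in> S"
    have "(\<Sum>w\<in>S. (\<Sum>s\<in>S. K m (i m) s z w * Q m s) * \<beta> w) =
        (\<Sum>w\<in>S. \<Sum>s\<in>S. \<beta> s * \<beta> w * K m (i m) s z w)"
      using m by (simp add: Q_def sum_distrib_left sum_distrib_right mult_ac)
    also have "\<dots> = (\<Sum>s\<in>S. \<Sum>w\<in>S. \<beta> s * \<beta> w * K m (i m) s z w)"
      by (rule sum.swap)
    also have "\<dots> = Q m (i m) * \<beta> z"
      using right[OF m i z] m by (simp add: Q_def)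
    finally show "(\<Sum>w\<in>S. (\<Sum>s\<in>S. K m (i m) s z w * Q m s) * \<beta> w) = Q m (i m) * \<beta> z" .
  qed
  also have "\<dots> = (\<Sum>z\<in>S. \<alpha> z * \<beta> z) * prodvec \<alpha> \<beta> x y i"
    unfolding prodvec_def Q_def by (simp add: mult.commute)
  finally show ?thesis .
qed

lemma Rmat_eq_chainsum:
  "Rmat d Us x e a = chainsum (Wl d) x tri (\<lambda>m z' z. gateG (Us m) z' (e m) (a m) z) circ"
  by (simp add: Rmat_def chainsum_def)

lemma Lmat_eq_chainsum:
  "Lmat d Us x b c = chainsum (Wl d) x circ (\<lambda>m z' z. gateG (Us m) (c m) z z' (b m)) cross"
  by (simp add: Lmat_def chainsum_def)

lemma Rmat_right_eig:
  assumes "y \<le> x"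
    and dual: "\<forall>m\<in>{1..y}. unitary_gate d (dual_gate (Us m))"
    and unitary: "\<forall>m\<in>{Suc y..x}. unitary_gate d (Us m)"
  shows "right_eig d x (Rmat d Us x) (of_nat (d\<^sup>2)) (rvec x y)"
  unfolding right_eig_def
proof
  fix e assume "e \<in> Ml d x"
  then have "mat_vec d x (Rmat d Us x) (rvec x y) e =
      (\<Sum>z\<in>Wl d. tri z * circ z) * rvec x y e"
    unfolding mat_vec_def Ml_def Rmat_eq_chainsum rvec_def
  proof (rule sum_PiE_chainsum_prodvec[OF finite_Wl \<open>y \<le> x\<close>,
        where K="\<lambda>m i s z' z. gateG (Us m) z' i s z"])
    fix m i z assume "m \<in> {1..y}" "i \<in> Wl d" "z \<in> Wl d"
    then have "(\<Sum>s\<in>Wl d. \<Sum>z'\<in>Wl d. tri s * tri z' * gateG (Us m) z' i s z) = tri i * tri z"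
      using dual gateG_contract_left[OF _ parity_pairing_block_reversal(2)]
      by (simp add: tri_eq_pairing_state mult.commute)
    then show "(\<Sum>z'\<in>Wl d. \<Sum>s\<in>Wl d. tri z' * tri s * gateG (Us m) z' i s z) = tri i * tri z"
      by (subst sum.swap) (simp only: ac_simps)
  next
    fix m i z assume "m \<in> {Suc y..x}" "i \<in> Wl d" "z \<in> Wl d"
    then show "(\<Sum>s\<in>Wl d. \<Sum>w\<in>Wl d. circ s * circ w * gateG (Us m) z i s w) = circ i * circ z"
      using unitary gateG_contract_inputs[OF _ parity_pairing_block_reversal(1)]
      by (simp add: circ_eq_pairing_state mult.commute)
  qed
  then show "mat_vec d x (Rmat d Us x) (rvec x y) e = of_nat (d\<^sup>2) * rvec x y e"
    by (simp add: inner_tri_circ)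
qed

lemma Rmat_left_eig:
  assumes "y \<le> x"
    and unitary: "\<forall>m\<in>{1..y}. unitary_gate d (Us m)"
    and dual: "\<forall>m\<in>{Suc y..x}. unitary_gate d (dual_gate (Us m))"
  shows "left_eig d x (Rmat d Us x) (of_nat (d\<^sup>2)) (rvec x y)"
  unfolding left_eig_def
proof
  fix a assume "a \<in> Ml d x"
  then have "(\<Sum>e\<in>Ml d x. Rmat d Us x e a * rvec x y e) =
      (\<Sum>z\<in>Wl d. tri z * circ z) * rvec x y a"
    unfolding Ml_def Rmat_eq_chainsum rvec_def
  proof (rule sum_PiE_chainsum_prodvec[OF finite_Wl \<open>y \<le> x\<close>,
        where K="\<lambda>m i s z' z. gateG (Us m) z' s i z"])
    fix m i z assume "m \<in> {1..y}" "i \<in> Wl d" "z \<in> Wl d"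
    then show "(\<Sum>z'\<in>Wl d. \<Sum>s\<in>Wl d. tri z' * tri s * gateG (Us m) z' s i z) = tri i * tri z"
      using unitary gateG_contract_outputs[OF _ parity_pairing_block_reversal(2)]
      by (simp add: tri_eq_pairing_state)
  next
    fix m i z assume "m \<in> {Suc y..x}" "i \<in> Wl d" "z \<in> Wl d"
    then have "(\<Sum>w\<in>Wl d. \<Sum>s\<in>Wl d. circ w * circ s * gateG (Us m) z s i w) = circ i * circ z"
      using dual gateG_contract_right[OF _ parity_pairing_block_reversal(1)]
      by (simp add: circ_eq_pairing_state)
    then show "(\<Sum>s\<in>Wl d. \<Sum>w\<in>Wl d. circ s * circ w * gateG (Us m) z s i w) = circ i * circ z"
      by (subst sum.swap) (simp only: ac_simps)
  qed
  then show "vec_mat d x (rvec x y) (Rmat d Us x) a = of_nat (d\<^sup>2) * rvec x y a"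
    using inner_tri_circ by (simp add: vec_mat_def mult.commute)
qed

lemma Lmat_right_eig:
  assumes "y \<le> x"
    and dual: "\<forall>m\<in>{1..y}. unitary_gate d (dual_gate (Us m))"
    and unitary: "\<forall>m\<in>{Suc y..x}. unitary_gate d (Us m)"
  shows "right_eig d x (Lmat d Us x) (of_nat (d\<^sup>2)) (lvec x y)"
  unfolding right_eig_def
proof
  fix b assume "b \<in> Ml d x"
  then have "mat_vec d x (Lmat d Us x) (lvec x y) b =
      (\<Sum>z\<in>Wl d. circ z * cross z) * lvec x y b"
    unfolding mat_vec_def Ml_def Lmat_eq_chainsum lvec_def
  proof (rule sum_PiE_chainsum_prodvec[OF finite_Wl \<open>y \<le> x\<close>,
        where K="\<lambda>m i s z' z. gateG (Us m) s z z' i"])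
    fix m i z assume "m \<in> {1..y}" "i \<in> Wl d" "z \<in> Wl d"
    then show "(\<Sum>z'\<in>Wl d. \<Sum>s\<in>Wl d. circ z' * circ s * gateG (Us m) s z z' i) = circ i * circ z"
      using dual gateG_contract_left[OF _ parity_pairing_block_reversal(1)]
      by (simp add: circ_eq_pairing_state mult.commute)
  next
    fix m i z assume "m \<in> {Suc y..x}" "i \<in> Wl d" "z \<in> Wl d"
    then show "(\<Sum>s\<in>Wl d. \<Sum>w\<in>Wl d. cross s * cross w * gateG (Us m) s w z i) = cross i * cross z"
      using unitary gateG_contract_outputs[OF _ parity_pairing_block_reversal(3)]
      by (simp add: cross_eq_pairing_state)
  qed
  then show "mat_vec d x (Lmat d Us x) (lvec x y) b = of_nat (d\<^sup>2) * lvec x y b"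
    by (simp add: inner_circ_cross)
qed

lemma Lmat_left_eig:
  assumes "y \<le> x"
    and unitary: "\<forall>m\<in>{1..y}. unitary_gate d (Us m)"
    and dual: "\<forall>m\<in>{Suc y..x}. unitary_gate d (dual_gate (Us m))"
  shows "left_eig d x (Lmat d Us x) (of_nat (d\<^sup>2)) (lvec x y)"
  unfolding left_eig_def
proof
  fix c assume "c \<in> Ml d x"
  then have "(\<Sum>b\<in>Ml d x. Lmat d Us x b c * lvec x y b) =
      (\<Sum>z\<in>Wl d. circ z * cross z) * lvec x y c"
    unfolding Ml_def Lmat_eq_chainsum lvec_def
  proof (rule sum_PiE_chainsum_prodvec[OF finite_Wl \<open>y \<le> x\<close>,
        where K="\<lambda>m i s z' z. gateG (Us m) i z z' s"])
    fix m i z assume "m \<in> {1..y}" "i \<in> Wl d" "z \<in> Wl d"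
    then show "(\<Sum>z'\<in>Wl d. \<Sum>s\<in>Wl d. circ z' * circ s * gateG (Us m) i z z' s) = circ i * circ z"
      using unitary gateG_contract_inputs[OF _ parity_pairing_block_reversal(1)]
      by (simp add: circ_eq_pairing_state)
  next
    fix m i z assume "m \<in> {Suc y..x}" "i \<in> Wl d" "z \<in> Wl d"
    then show "(\<Sum>s\<in>Wl d. \<Sum>w\<in>Wl d. cross s * cross w * gateG (Us m) i w z s) = cross i * cross z"
      using dual gateG_contract_right[OF _ parity_pairing_block_reversal(3)]
      by (simp add: cross_eq_pairing_state)
  qed
  then show "vec_mat d x (lvec x y) (Lmat d Us x) c = of_nat (d\<^sup>2) * lvec x y c"
    by (simp add: vec_mat_def inner_circ_cross mult.commute)
qed

lemma lin_indep_family_prodvec: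
  assumes "u \<in> Wl d" "v \<in> Wl d" "f u = 1" "g u = 0" "f v = 0" "g v = 1"
  shows "lin_indep_family d x (prodvec f g x)"
  unfolding lin_indep_family_def
proof (intro allI impI)
  fix c :: "nat \<Rightarrow> complex" and z
  assume vanish: "\<forall>a\<in>Ml d x. (\<Sum>y\<le>x. c y * prodvec f g x y a) = 0" and "z \<le> x"
  define a where "a = (\<lambda>m\<in>{1..x}. if m \<le> z then u else v)"
  have a_value: "prodvec f g x y a = (if y = z then 1 else 0)" if "y \<le> x" for y
  proof -
    have "prodvec f g x y a = (\<Prod>m\<in>{1..x}. if (m \<le> y \<longleftrightarrow> m \<le> z) then 1 else 0)"
      unfolding prodvec_def a_def using assms(3-6) by (intro prod.cong refl) simp
    moreover have "\<exists>m\<in>{1..x}. \<not> (m \<le> y \<longleftrightarrow> m \<le> z)" if "y \<noteq> z"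
      using \<open>y \<noteq> z\<close> \<open>y \<le> x\<close> \<open>z \<le> x\<close> by (intro bexI[of _ "max y z"]) auto
    ultimately show ?thesis
      by (auto simp: prod.neutral prod_zero)
  qed
  have "a \<in> Ml d x"
    using assms(1,2) by (simp add: a_def Ml_def)
  then have "0 = (\<Sum>y\<le>x. c y * prodvec f g x y a)"
    using vanish by simp
  also have "\<dots> = (\<Sum>y\<le>x. c y * (if y = z then 1 else 0))"
    using a_value by (intro sum.cong refl) simp
  also have "\<dots> = c z"
    using \<open>z \<le> x\<close> by (simp add: if_distrib cong: if_cong)
  finally show "c z = 0"
    by simp
qed

definition binary_label :: "nat set \<Rightarrow> wlabel" where
  "binary_label A = (\<lambda>t. if t < 8 then if t \<in> A then 1 else 0 else undefined)"

lemma binary_label_in_Wl: "2 \<le> d \<Longrightarrow> binary_label A \<in> Wl d"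
  by (simp add: mem_Wl_iff binary_label_def)

lemma lin_indep_rvec:
  assumes "2 \<le> d"
  shows "lin_indep_family d x (rvec x)"
proof -
  have "lin_indep_family d x (prodvec tri circ x)"
    by (rule lin_indep_family_prodvec[where u="binary_label {1, 2, 5, 6}"
          and v="binary_label {2, 3, 6, 7}"])
      (use binary_label_in_Wl[OF assms] in \<open>simp_all add: binary_label_def tri_def circ_def\<close>)
  then show ?thesis
    by (simp add: rvec_def[abs_def])
qed

lemma lin_indep_lvec:
  assumes "2 \<le> d"
  shows "lin_indep_family d x (lvec x)"
proof -
  have "lin_indep_family d x (prodvec circ cross x)"
    by (rule lin_indep_family_prodvec[where u="binary_label {2, 3, 6, 7}"
          and v="binary_label {1, 3, 4, 6}"])
      (use binary_label_in_Wl[OF assms] in \<open>simp_all add: binary_label_def circ_def cross_def\<close>)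
  then show ?thesis
    by (simp add: lvec_def[abs_def])
qed

theorem lemma2:
  fixes d x :: nat and Us :: "nat \<Rightarrow> gate"
  assumes "d \<ge> 2" and "x \<ge> 1"
    and "\<forall>m\<in>{1..x}. unitary_gate d (Us m)"
  shows "((\<forall>m\<in>{1..x}. dual_unitary d (Us m)) \<longrightarrow>
           lin_indep_family d x (rvec x) \<and> lin_indep_family d x (lvec x) \<and>
           (\<forall>y\<le>x. right_eig d x (Rmat d Us x) (of_nat (d^2)) (rvec x y) \<and>
                   left_eig d x (Rmat d Us x) (of_nat (d^2)) (rvec x y) \<and>
                   right_eig d x (Lmat d Us x) (of_nat (d^2)) (lvec x y) \<and>
                   left_eig d x (Lmat d Us x) (of_nat (d^2)) (lvec x y)))
       \<and> right_eig d x (Rmat d Us x) (of_nat (d^2)) (rvec x 0)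
       \<and> right_eig d x (Lmat d Us x) (of_nat (d^2)) (lvec x 0)
       \<and> left_eig d x (Rmat d Us x) (of_nat (d^2)) (rvec x x)
       \<and> left_eig d x (Lmat d Us x) (of_nat (d^2)) (lvec x x)"
proof (intro conjI impI allI)
  assume "\<forall>m\<in>{1..x}. dual_unitary d (Us m)"
  then have dual: "\<forall>m\<in>{1..x}. unitary_gate d (dual_gate (Us m))"
    by (simp add: dual_unitary_def)
  show "lin_indep_family d x (rvec x)" "lin_indep_family d x (lvec x)"
    using \<open>d \<ge> 2\<close> by (rule lin_indep_rvec, rule lin_indep_lvec)
  fix y assume "y \<le> x"
  then show "right_eig d x (Rmat d Us x) (of_nat (d^2)) (rvec x y)"
    "left_eig d x (Rmat d Us x) (of_nat (d^2)) (rvec x y)"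
    "right_eig d x (Lmat d Us x) (of_nat (d^2)) (lvec x y)"
    "left_eig d x (Lmat d Us x) (of_nat (d^2)) (lvec x y)"
    using dual assms(3)
    by (intro Rmat_right_eig Rmat_left_eig Lmat_right_eig Lmat_left_eig; auto)+
next
  show "right_eig d x (Rmat d Us x) (of_nat (d^2)) (rvec x 0)"
    "right_eig d x (Lmat d Us x) (of_nat (d^2)) (lvec x 0)"
    using Rmat_right_eig[of 0] Lmat_right_eig[of 0] assms(3) by simp_all
  show "left_eig d x (Rmat d Us x) (of_nat (d^2)) (rvec x x)"
    "left_eig d x (Lmat d Us x) (of_nat (d^2)) (lvec x x)"
    using Rmat_left_eig[of x] Lmat_left_eig[of x] assms(3) by simp_all
qed

end
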